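(* Assume Assumption A and that the design is strongly stable with limit $p^\star$. Let $N_1=\sum_{i=1}^NK_i$, $N_0=N-N_1$, and $$\widehat m_0^2=\frac{1}{\max\{N_0,1\}}\sum_{i=1}^N(1-K_i)Y_i^2,\qquad \widehat m_1^2=\frac{1}{\max\{N_1,1\}}\sum_{i=1}^NK_iY_i^2,$$ $$\widehat V^{\mathrm{IPW}}_{\mathrm{strong}}=\Big(\widehat m_0\sqrt{\tfrac{p^\star}{1-p^\star}}+\widehat m_1\sqrt{\tfrac{1-p^\star}{p^\star}}\Big)^2 ,$$ where $\widehat m_\ell=\sqrt{\widehat m_\ell^2}$. Then $\widehat m_0^2\xrightarrow{p}m_0^2$ and $\widehat m_1^2\xrightarrow{p}m_1^2$; moreover $\widehat V^{\mathrm{IPW}}_{\mathrm{strong}}$ converges in probability to $\big(m_0\sqrt{p^\star/(1-p^\star)}+m_1\sqrt{(1-p^\star)/p^\star}\big)^2$, which is $\ge V^{\mathrm{IPW}}_{\mathrm{strong}}:=m_0^2\frac{p^\star}{1-p^\star}+m_1^2\frac{1-p^\star}{p^\star}+2m_{01}$ (so the estimator is conservative), and $\widehat V^{\mathrm{IPW}}_{\mathrm{strong}}$ is consistent for $V^{\mathrm{IPW}}_{\mathrm{strong}}$ when the potential outcomes are additive on the log scale, i.e. $Y_i(1)=cY_i(0)$ for all $i$ for some constant $c\in\mathbb R$.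
   Context: Setup. Let $(Y_i(0),Y_i(1))_{i\ge1}$ be a fixed (non-random) sequence of pairs of real numbers (potential outcomes under control and treatment). For each $N$ the experiment consists of units $1,\dots,N$. Random treatment indicators $K_1,K_2,\dots\in\{0,1\}$ are assigned sequentially and the observed outcome is $Y_i=K_iY_i(1)+(1-K_i)Y_i(0)$. Let $\mathcal F_0$ be the trivial $\sigma$-field and $\mathcal F_{i-1}=\sigma(K_1,Y_1,\dots,K_{i-1},Y_{i-1})$. A sequential design is a sequence of random variables $(p_i)_{i\ge1}$ (inclusion probabilities) such that $p_i$ is $\mathcal F_{i-1}$-measurable and $\mathbb P(K_i=1\mid\mathcal F_{i-1})=p_i$. Strong design stability: there is a non-random $p^\star\in(0,1)$ with $p_i\xrightarrow{p}p^\star$ as $i\to\infty$. Assumption A: (a) there is $\delta\in(0,1)$ with $p_i\in[\delta,1-\delta]$ for all $i\ge1$; (b) there is $M>0$ with $|Y_i(\ell)|\le M$ for all $i\ge1$, $\ell\in\{0,1\}$; (c) the limits $m_0^2=\lim_N\frac1N\sum_{i=1}^NY_i(0)^2$, $m_1^2=\lim_N\frac1N\sum_{i=1}^NY_i(1)^2$, $m_{01}=\lim_N\frac1N\sum_{i=1}^NY_i(0)Y_i(1)$ exist, with $m_0^2,m_1^2>0$ and $m_{01}\in\mathbb R$; $m_\ell=\sqrt{m_\ell^2}$. *)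

theory Defs
  imports "HOL-Probability.Probability"
begin

definition obs :: "(nat \<Rightarrow> 'a \<Rightarrow> bool) \<Rightarrow> (nat \<Rightarrow> real) \<Rightarrow> (nat \<Rightarrow> real) \<Rightarrow> nat \<Rightarrow> 'a \<Rightarrow> real" where
  "obs K Y0 Y1 i \<omega> = (if K i \<omega> then Y1 i else Y0 i)"

definition hist :: "'a measure \<Rightarrow> (nat \<Rightarrow> 'a \<Rightarrow> bool) \<Rightarrow> (nat \<Rightarrow> real) \<Rightarrow> (nat \<Rightarrow> real) \<Rightarrow> nat \<Rightarrow> 'a measure" where
  "hist M K Y0 Y1 n = sigma (space M)
     {(\<lambda>\<omega>. (K j \<omega>, obs K Y0 Y1 j \<omega>)) -` A \<inter> space M | j A.
        1 \<le> j \<and> j \<le> n \<and> A \<in> sets (count_space UNIV \<Otimes>\<^sub>M (borel :: real measure))}"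

definition sequential_design :: "'a measure \<Rightarrow> (nat \<Rightarrow> 'a \<Rightarrow> bool) \<Rightarrow> (nat \<Rightarrow> real) \<Rightarrow> (nat \<Rightarrow> real)
    \<Rightarrow> (nat \<Rightarrow> 'a \<Rightarrow> real) \<Rightarrow> bool" where
  "sequential_design M K Y0 Y1 p \<longleftrightarrow>
     (\<forall>i\<ge>1. K i \<in> measurable M (count_space UNIV)
        \<and> p i \<in> borel_measurable (hist M K Y0 Y1 (i - 1))
        \<and> (AE \<omega> in M. real_cond_exp M (hist M K Y0 Y1 (i - 1))
                          (\<lambda>\<omega>. indicator {\<omega>. K i \<omega>} \<omega>) \<omega> = p i \<omega>))"

definition conv_in_prob :: "'a measure \<Rightarrow> (nat \<Rightarrow> 'a \<Rightarrow> real) \<Rightarrow> real \<Rightarrow> bool" where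
  "conv_in_prob M X c \<longleftrightarrow>
     (\<forall>\<epsilon>>0. (\<lambda>n. measure M {\<omega> \<in> space M. \<bar>X n \<omega> - c\<bar> > \<epsilon>}) \<longlonglongrightarrow> 0)"

definition N1 :: "(nat \<Rightarrow> 'a \<Rightarrow> bool) \<Rightarrow> nat \<Rightarrow> 'a \<Rightarrow> real" where
  "N1 K N \<omega> = (\<Sum>i=1..N. if K i \<omega> then 1 else 0)"

definition N0 :: "(nat \<Rightarrow> 'a \<Rightarrow> bool) \<Rightarrow> nat \<Rightarrow> 'a \<Rightarrow> real" where
  "N0 K N \<omega> = real N - N1 K N \<omega>"

definition m0hat_sq :: "(nat \<Rightarrow> 'a \<Rightarrow> bool) \<Rightarrow> (nat \<Rightarrow> real) \<Rightarrow> (nat \<Rightarrow> real) \<Rightarrow> nat \<Rightarrow> 'a \<Rightarrow> real" where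
  "m0hat_sq K Y0 Y1 N \<omega> =
     (\<Sum>i=1..N. (if K i \<omega> then 0 else 1) * (obs K Y0 Y1 i \<omega>)\<^sup>2) / max (N0 K N \<omega>) 1"

definition m1hat_sq :: "(nat \<Rightarrow> 'a \<Rightarrow> bool) \<Rightarrow> (nat \<Rightarrow> real) \<Rightarrow> (nat \<Rightarrow> real) \<Rightarrow> nat \<Rightarrow> 'a \<Rightarrow> real" where
  "m1hat_sq K Y0 Y1 N \<omega> =
     (\<Sum>i=1..N. (if K i \<omega> then 1 else 0) * (obs K Y0 Y1 i \<omega>)\<^sup>2) / max (N1 K N \<omega>) 1"

definition Vhat_strong :: "(nat \<Rightarrow> 'a \<Rightarrow> bool) \<Rightarrow> (nat \<Rightarrow> real) \<Rightarrow> (nat \<Rightarrow> real) \<Rightarrow> real \<Rightarrow> nat \<Rightarrow> 'a \<Rightarrow> real" where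
  "Vhat_strong K Y0 Y1 ps N \<omega> =
     (sqrt (m0hat_sq K Y0 Y1 N \<omega>) * sqrt (ps / (1 - ps))
      + sqrt (m1hat_sq K Y0 Y1 N \<omega>) * sqrt ((1 - ps) / ps))\<^sup>2"

end

theory Submission
  imports Defs
begin

(*
  Write I_i for the treatment indicator of unit i. For a bounded sequence (a_i),
    (1/N) sum I_i a_i = (1/N) sum (I_i - p_i) a_i + (1/N) sum (p_i - ps) a_i + ps (1/N) sum a_i.
  The summands (I_i - p_i) a_i are martingale differences for the history sigma-fields, hence
  orthogonal, and the first average tends to 0 in L^2. Strong stability together with
  boundedness gives E|p_i - ps| -> 0, so by Cesaro the second average tends to 0 in L^1.
  Treated averages therefore converge in probability to ps times the population averages, and
  untreated ones to 1 - ps times them. The estimators of m0^2 and m1^2 are ratios of such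
  averages and Vhat is a continuous function of the two estimators. Expanding the square, the
  limit of Vhat exceeds V by 2 (m0 m1 - m01), which is nonnegative by Cauchy-Schwarz and
  vanishes when Y(1) is proportional to Y(0).
*)

abbreviation treated :: "(nat \<Rightarrow> 'a \<Rightarrow> bool) \<Rightarrow> nat \<Rightarrow> 'a \<Rightarrow> real" where
  "treated K i \<omega> \<equiv> if K i \<omega> then 1 else 0"

lemma Cesaro_mean_tendsto_zero:
  fixes e :: "nat \<Rightarrow> real"
  assumes lim: "e \<longlonglongrightarrow> 0" and nonneg: "\<And>i. 0 \<le> e i"
  shows "(\<lambda>N. (\<Sum>i=1..N. e i) / real N) \<longlonglongrightarrow> 0"
proof (rule order_tendstoI)
  fix r :: real
  assume "r < 0"
  have "r < (\<Sum>i=1..N. e i) / real N" for N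
    using \<open>r < 0\<close> nonneg by (smt (verit) divide_nonneg_nonneg of_nat_0_le_iff sum_nonneg)
  then show "\<forall>\<^sub>F N in sequentially. r < (\<Sum>i=1..N. e i) / real N"
    by simp
next
  fix r :: real
  assume "0 < r"
  then obtain n0 where small: "\<And>i. n0 \<le> i \<Longrightarrow> e i < r / 2"
    using order_tendstoD(2)[OF lim, of "r / 2"] by (auto simp: eventually_sequentially)
  define C where "C = (\<Sum>i=1..n0. e i)"
  have "\<forall>\<^sub>F N in sequentially. C / real N < r / 2"
    using order_tendstoD(2)[OF lim_const_over_n[of C], of "r / 2"] \<open>0 < r\<close> by simp
  then show "\<forall>\<^sub>F N in sequentially. (\<Sum>i=1..N. e i) / real N < r"
    using eventually_gt_at_top[of n0]
  proof eventually_elim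
    case (elim N)
    have "{1..N} = {1..n0} \<union> {n0<..N}"
      using elim(2) by auto
    then have "(\<Sum>i=1..N. e i) = C + (\<Sum>i\<in>{n0<..N}. e i)"
      unfolding C_def by (simp add: sum.union_disjoint ivl_disj_int)
    also have "(\<Sum>i\<in>{n0<..N}. e i) \<le> (\<Sum>i\<in>{n0<..N}. r / 2)"
      using small by (intro sum_mono) (simp add: less_imp_le)
    also have "\<dots> \<le> real N * (r / 2)"
      using \<open>0 < r\<close> by simp
    finally have "(\<Sum>i=1..N. e i) / real N \<le> C / real N + r / 2"
      using elim(2) by (simp add: field_simps)
    then show ?case
      using elim(1) by linarith
  qed
qed

lemma abs_power2_le_power2: "\<bar>y\<bar> \<le> B \<Longrightarrow> \<bar>y\<^sup>2\<bar> \<le> B\<^sup>2" for y B :: real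
  by (simp add: abs_le_square_iff[symmetric])

lemma isCont_prod_boxD:
  fixes f :: "real \<times> real \<Rightarrow> real"
  assumes "isCont f (a, b)" and "\<epsilon> > 0"
  obtains \<eta> where "\<eta> > 0" and "\<And>x y. \<bar>x - a\<bar> \<le> \<eta> \<Longrightarrow> \<bar>y - b\<bar> \<le> \<eta> \<Longrightarrow> \<bar>f (x, y) - f (a, b)\<bar> \<le> \<epsilon>"
proof -
  obtain d where "d > 0" and d: "\<And>z. dist z (a, b) < d \<Longrightarrow> dist (f z) (f (a, b)) < \<epsilon>"
    using assms unfolding continuous_at_eps_delta by blast
  have "\<bar>f (x, y) - f (a, b)\<bar> \<le> \<epsilon>" if "\<bar>x - a\<bar> \<le> d / 3" "\<bar>y - b\<bar> \<le> d / 3" for x y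
  proof -
    have "dist (x, y) (a, b) \<le> norm (x - a) + norm (y - b)"
      using norm_Pair_le[of "x - a" "y - b"] by (simp add: dist_norm)
    also have "\<dots> < d"
      using that \<open>d > 0\<close> by simp
    finally show ?thesis
      using d by (fastforce simp: dist_real_def)
  qed
  with \<open>d > 0\<close> show ?thesis
    by (intro that[of "d / 3"]) auto
qed

lemma divide_max_one_eq_ratio_of_means:
  fixes s c q :: real
  assumes "q > 0" and "2 / q < real N" and "\<bar>c / real N - q\<bar> \<le> q / 2"
  shows "s / max c 1 = (s / real N) / (c / real N)"
proof -
  have "0 < real N"
    using assms(1,2) by (smt (verit) divide_pos_pos)
  have "1 < q / 2 * real N"
    using assms(1,2) by (simp add: field_simps)
  also have "q / 2 * real N \<le> c"
    using abs_le_D2[OF assms(3)] \<open>0 < real N\<close> by (simp add: field_simps)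
  finally show ?thesis
    using \<open>0 < real N\<close> by simp
qed

section \<open>Convergence in probability\<close>

lemma conv_in_prob_of_tendsto:
  assumes "f \<longlonglongrightarrow> L"
  shows "conv_in_prob M (\<lambda>n \<omega>. f n) L"
  unfolding conv_in_prob_def
proof (intro allI impI)
  fix \<epsilon> :: real
  assume "\<epsilon> > 0"
  have "\<forall>\<^sub>F n in sequentially. measure M {\<omega> \<in> space M. \<bar>f n - L\<bar> > \<epsilon>} = 0"
    using tendstoD[OF assms \<open>\<epsilon> > 0\<close>] by eventually_elim (simp add: dist_real_def)
  then show "(\<lambda>n. measure M {\<omega> \<in> space M. \<bar>f n - L\<bar> > \<epsilon>}) \<longlonglongrightarrow> 0"
    by (rule tendsto_eventually)
qed

lemma conv_in_prob_by_tail_bound: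
  assumes "\<And>\<epsilon>. \<epsilon> > 0 \<Longrightarrow> \<exists>b. b \<longlonglongrightarrow> 0 \<and>
             (\<forall>\<^sub>F n in sequentially. measure M {\<omega> \<in> space M. \<bar>X n \<omega> - c\<bar> > \<epsilon>} \<le> b n)"
  shows "conv_in_prob M X c"
  unfolding conv_in_prob_def
proof (intro allI impI)
  fix \<epsilon> :: real
  assume "\<epsilon> > 0"
  then obtain b where b: "b \<longlonglongrightarrow> 0"
    and le: "\<forall>\<^sub>F n in sequentially. measure M {\<omega> \<in> space M. \<bar>X n \<omega> - c\<bar> > \<epsilon>} \<le> b n"
    using assms by blast
  show "(\<lambda>n. measure M {\<omega> \<in> space M. \<bar>X n \<omega> - c\<bar> > \<epsilon>}) \<longlonglongrightarrow> 0"
    by (rule tendsto_sandwich[OF _ le tendsto_const b]) simp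
qed

context prob_space
begin

lemma integrable_if_bounded:
  fixes f :: "'a \<Rightarrow> real"
  assumes "f \<in> borel_measurable M" and "\<And>\<omega>. \<omega> \<in> space M \<Longrightarrow> \<bar>f \<omega>\<bar> \<le> B"
  shows "integrable M f"
  using assms by (intro integrable_const_bound[where B = B]) auto

lemma conv_in_prob_if_close:
  assumes [measurable]: "\<And>n. X n \<in> borel_measurable M" "\<And>n. Y n \<in> borel_measurable M"
    and X: "conv_in_prob M X a" and Y: "conv_in_prob M Y b"
    and close: "\<And>\<epsilon>. \<epsilon> > 0 \<Longrightarrow> \<exists>\<eta>>0. \<forall>\<^sub>F n in sequentially. \<forall>\<omega>\<in>space M.
                  \<bar>X n \<omega> - a\<bar> \<le> \<eta> \<longrightarrow> \<bar>Y n \<omega> - b\<bar> \<le> \<eta> \<longrightarrow> \<bar>Z n \<omega> - c\<bar> \<le> \<epsilon>"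
  shows "conv_in_prob M Z c"
proof (rule conv_in_prob_by_tail_bound)
  fix \<epsilon> :: real
  assume "\<epsilon> > 0"
  then obtain \<eta> where "\<eta> > 0" and near: "\<forall>\<^sub>F n in sequentially. \<forall>\<omega>\<in>space M.
      \<bar>X n \<omega> - a\<bar> \<le> \<eta> \<longrightarrow> \<bar>Y n \<omega> - b\<bar> \<le> \<eta> \<longrightarrow> \<bar>Z n \<omega> - c\<bar> \<le> \<epsilon>"
    using close by blast
  define PX where "PX n = measure M {\<omega> \<in> space M. \<bar>X n \<omega> - a\<bar> > \<eta>}" for n
  define PY where "PY n = measure M {\<omega> \<in> space M. \<bar>Y n \<omega> - b\<bar> > \<eta>}" for n
  have "(\<lambda>n. PX n + PY n) \<longlonglongrightarrow> 0 + 0"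
    using X Y \<open>\<eta> > 0\<close> unfolding conv_in_prob_def PX_def PY_def by (intro tendsto_add) auto
  moreover have "\<forall>\<^sub>F n in sequentially. measure M {\<omega> \<in> space M. \<bar>Z n \<omega> - c\<bar> > \<epsilon>} \<le> PX n + PY n"
    using near
  proof eventually_elim
    case (elim n)
    have "{\<omega> \<in> space M. \<bar>Z n \<omega> - c\<bar> > \<epsilon>}
        \<subseteq> {\<omega> \<in> space M. \<bar>X n \<omega> - a\<bar> > \<eta>} \<union> {\<omega> \<in> space M. \<bar>Y n \<omega> - b\<bar> > \<eta>}"
      using elim by fastforce
    then have "measure M {\<omega> \<in> space M. \<bar>Z n \<omega> - c\<bar> > \<epsilon>}
        \<le> measure M ({\<omega> \<in> space M. \<bar>X n \<omega> - a\<bar> > \<eta>} \<union> {\<omega> \<in> space M. \<bar>Y n \<omega> - b\<bar> > \<eta>})"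
      by (rule finite_measure_mono) measurable
    also have "\<dots> \<le> PX n + PY n"
      unfolding PX_def PY_def by (rule measure_Un_le; measurable)
    finally show ?case .
  qed
  ultimately show "\<exists>b. b \<longlonglongrightarrow> 0 \<and>
      (\<forall>\<^sub>F n in sequentially. measure M {\<omega> \<in> space M. \<bar>Z n \<omega> - c\<bar> > \<epsilon>} \<le> b n)"
    by auto
qed

lemma conv_in_prob_continuous_map:
  fixes f :: "real \<times> real \<Rightarrow> real"
  assumes "\<And>n. X n \<in> borel_measurable M" "\<And>n. Y n \<in> borel_measurable M"
    and "conv_in_prob M X a" "conv_in_prob M Y b" and f: "isCont f (a, b)"
  shows "conv_in_prob M (\<lambda>n \<omega>. f (X n \<omega>, Y n \<omega>)) (f (a, b))"
proof (rule conv_in_prob_if_close[OF assms(1-4)])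
  fix \<epsilon> :: real
  assume "\<epsilon> > 0"
  then obtain \<eta> where "\<eta> > 0"
    and "\<And>x y. \<bar>x - a\<bar> \<le> \<eta> \<Longrightarrow> \<bar>y - b\<bar> \<le> \<eta> \<Longrightarrow> \<bar>f (x, y) - f (a, b)\<bar> \<le> \<epsilon>"
    using isCont_prod_boxD[OF f] by blast
  then show "\<exists>\<eta>>0. \<forall>\<^sub>F n in sequentially. \<forall>\<omega>\<in>space M.
      \<bar>X n \<omega> - a\<bar> \<le> \<eta> \<longrightarrow> \<bar>Y n \<omega> - b\<bar> \<le> \<eta> \<longrightarrow> \<bar>f (X n \<omega>, Y n \<omega>) - f (a, b)\<bar> \<le> \<epsilon>"
    by auto
qed

lemma conv_in_prob_add:
  assumes "\<And>n. X n \<in> borel_measurable M" "\<And>n. Y n \<in> borel_measurable M"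
    and "conv_in_prob M X a" "conv_in_prob M Y b"
  shows "conv_in_prob M (\<lambda>n \<omega>. X n \<omega> + Y n \<omega>) (a + b)"
proof -
  have "isCont (\<lambda>z::real \<times> real. fst z + snd z) (a, b)"
    by (intro continuous_intros)
  from conv_in_prob_continuous_map[OF assms this] show ?thesis
    by simp
qed

lemma conv_in_prob_diff:
  assumes "\<And>n. X n \<in> borel_measurable M" "\<And>n. Y n \<in> borel_measurable M"
    and "conv_in_prob M X a" "conv_in_prob M Y b"
  shows "conv_in_prob M (\<lambda>n \<omega>. X n \<omega> - Y n \<omega>) (a - b)"
proof -
  have "isCont (\<lambda>z::real \<times> real. fst z - snd z) (a, b)"
    by (intro continuous_intros)
  from conv_in_prob_continuous_map[OF assms this] show ?thesis
    by simp
qed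

lemma conv_in_prob_ratio:
  fixes S C :: "nat \<Rightarrow> 'a \<Rightarrow> real"
  assumes [measurable]: "\<And>N. S N \<in> borel_measurable M" "\<And>N. C N \<in> borel_measurable M"
    and S: "conv_in_prob M (\<lambda>N \<omega>. S N \<omega> / real N) (q * m)"
    and C: "conv_in_prob M (\<lambda>N \<omega>. C N \<omega> / real N) q" and "q > 0"
  shows "conv_in_prob M (\<lambda>N \<omega>. S N \<omega> / max (C N \<omega>) 1) m"
proof (rule conv_in_prob_if_close[OF _ _ S C])
  show "(\<lambda>\<omega>. S N \<omega> / real N) \<in> borel_measurable M" for N
    by measurable
  show "(\<lambda>\<omega>. C N \<omega> / real N) \<in> borel_measurable M" for N
    by measurable
  fix \<epsilon> :: real
  assume "\<epsilon> > 0"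
  have "isCont (\<lambda>z::real \<times> real. fst z / snd z) (q * m, q)"
    using \<open>q > 0\<close> by (intro continuous_intros) auto
  from isCont_prod_boxD[OF this \<open>\<epsilon> > 0\<close>] obtain \<eta> where "\<eta> > 0"
    and quotient: "\<And>x y. \<bar>x - q * m\<bar> \<le> \<eta> \<Longrightarrow> \<bar>y - q\<bar> \<le> \<eta> \<Longrightarrow> \<bar>x / y - m\<bar> \<le> \<epsilon>"
    using \<open>q > 0\<close> by auto
  have "\<forall>\<^sub>F N in sequentially. 2 / q < real N"
    by (rule filterlim_real_sequentially[THEN filterlim_at_top_dense[THEN iffD1], rule_format])
  then have "\<forall>\<^sub>F N in sequentially. \<forall>\<omega>\<in>space M. \<bar>S N \<omega> / real N - q * m\<bar> \<le> min \<eta> (q / 2) \<longrightarrow>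
      \<bar>C N \<omega> / real N - q\<bar> \<le> min \<eta> (q / 2) \<longrightarrow> \<bar>S N \<omega> / max (C N \<omega>) 1 - m\<bar> \<le> \<epsilon>"
  proof eventually_elim
    case (elim N)
    show ?case
    proof (intro ballI impI)
      fix \<omega>
      assume "\<bar>S N \<omega> / real N - q * m\<bar> \<le> min \<eta> (q / 2)" "\<bar>C N \<omega> / real N - q\<bar> \<le> min \<eta> (q / 2)"
      then have S_near: "\<bar>S N \<omega> / real N - q * m\<bar> \<le> \<eta>"
        and C_near: "\<bar>C N \<omega> / real N - q\<bar> \<le> \<eta>" "\<bar>C N \<omega> / real N - q\<bar> \<le> q / 2"
        by (simp_all only: min.bounded_iff)
      show "\<bar>S N \<omega> / max (C N \<omega>) 1 - m\<bar> \<le> \<epsilon>"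
        unfolding divide_max_one_eq_ratio_of_means[OF \<open>q > 0\<close> elim C_near(2)]
        by (rule quotient[OF S_near C_near(1)])
    qed
  qed
  then show "\<exists>\<eta>>0. \<forall>\<^sub>F N in sequentially. \<forall>\<omega>\<in>space M. \<bar>S N \<omega> / real N - q * m\<bar> \<le> \<eta> \<longrightarrow>
      \<bar>C N \<omega> / real N - q\<bar> \<le> \<eta> \<longrightarrow> \<bar>S N \<omega> / max (C N \<omega>) 1 - m\<bar> \<le> \<epsilon>"
    using \<open>\<eta> > 0\<close> \<open>q > 0\<close> by (intro exI[of _ "min \<eta> (q / 2)"]) auto
qed

section \<open>Laws of large numbers\<close>

lemma integral_abs_le_tail:
  fixes Z :: "'a \<Rightarrow> real"
  assumes [measurable]: "Z \<in> borel_measurable M"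
    and bound: "\<And>\<omega>. \<omega> \<in> space M \<Longrightarrow> \<bar>Z \<omega>\<bar> \<le> B" and "0 < t"
  shows "(\<integral>\<omega>. \<bar>Z \<omega>\<bar> \<partial>M) \<le> t + B * measure M {\<omega> \<in> space M. \<bar>Z \<omega>\<bar> > t}"
proof -
  define A where "A = {\<omega> \<in> space M. \<bar>Z \<omega>\<bar> > t}"
  have "A \<in> sets M"
    unfolding A_def by measurable
  then have int_A: "integrable M (indicator A :: 'a \<Rightarrow> real)"
    by (simp add: emeasure_eq_measure)
  have "(\<integral>\<omega>. \<bar>Z \<omega>\<bar> \<partial>M) \<le> (\<integral>\<omega>. t + B * indicator A \<omega> \<partial>M)"
  proof (rule integral_mono)
    show "integrable M (\<lambda>\<omega>. \<bar>Z \<omega>\<bar>)"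
      using bound by (intro integrable_if_bounded[where B = B]) auto
    show "integrable M (\<lambda>\<omega>. t + B * indicator A \<omega>)"
      using int_A by simp
    show "\<bar>Z \<omega>\<bar> \<le> t + B * indicator A \<omega>" if "\<omega> \<in> space M" for \<omega>
      using bound[OF that] that \<open>0 < t\<close> by (auto simp: A_def indicator_def)
  qed
  also have "\<dots> = t + B * measure M A"
    using int_A \<open>A \<in> sets M\<close> by (simp add: prob_space)
  finally show ?thesis
    unfolding A_def .
qed

lemma integral_abs_tendsto_zero_if_conv_in_prob:
  assumes meas: "\<And>n. 1 \<le> n \<Longrightarrow> X n \<in> borel_measurable M"
    and bound: "\<And>n \<omega>. 1 \<le> n \<Longrightarrow> \<omega> \<in> space M \<Longrightarrow> \<bar>X n \<omega> - c\<bar> \<le> B"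
    and conv: "conv_in_prob M X c"
  shows "(\<lambda>n. \<integral>\<omega>. \<bar>X n \<omega> - c\<bar> \<partial>M) \<longlonglongrightarrow> 0"
proof (rule order_tendstoI)
  fix r :: real
  assume "r < 0"
  then show "\<forall>\<^sub>F n in sequentially. r < (\<integral>\<omega>. \<bar>X n \<omega> - c\<bar> \<partial>M)"
    by (intro always_eventually allI less_le_trans[OF _ integral_nonneg_AE]) auto
next
  fix r :: real
  assume "0 < r"
  then have "r / 2 > 0"
    by simp
  then have "(\<lambda>n. measure M {\<omega> \<in> space M. \<bar>X n \<omega> - c\<bar> > r / 2}) \<longlonglongrightarrow> 0"
    using conv unfolding conv_in_prob_def by blast
  then have "(\<lambda>n. B * measure M {\<omega> \<in> space M. \<bar>X n \<omega> - c\<bar> > r / 2}) \<longlonglongrightarrow> B * 0"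
    by (intro tendsto_mult tendsto_const)
  then have "\<forall>\<^sub>F n in sequentially. B * measure M {\<omega> \<in> space M. \<bar>X n \<omega> - c\<bar> > r / 2} < r / 2"
    using \<open>0 < r\<close> by (intro order_tendstoD(2)) auto
  then show "\<forall>\<^sub>F n in sequentially. (\<integral>\<omega>. \<bar>X n \<omega> - c\<bar> \<partial>M) < r"
    using eventually_ge_at_top[of 1]
  proof eventually_elim
    case (elim n)
    have "(\<integral>\<omega>. \<bar>X n \<omega> - c\<bar> \<partial>M) \<le> r / 2 + B * measure M {\<omega> \<in> space M. \<bar>X n \<omega> - c\<bar> > r / 2}"
      using meas[OF elim(2)] bound[OF elim(2)] \<open>0 < r\<close> by (intro integral_abs_le_tail) auto
    then show ?case
      using elim(1) by linarith
  qed
qed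

lemma prob_abs_mean_gt_le:
  fixes X :: "nat \<Rightarrow> 'a \<Rightarrow> real"
  assumes int: "\<And>i. 1 \<le> i \<Longrightarrow> integrable M (X i)" and "\<epsilon> > 0"
  shows "measure M {\<omega> \<in> space M. \<bar>(\<Sum>i=1..N. X i \<omega>) / real N\<bar> > \<epsilon>}
      \<le> (\<Sum>i=1..N. \<integral>\<omega>. \<bar>X i \<omega>\<bar> \<partial>M) / real N / \<epsilon>"
proof -
  define T where "T \<omega> = (\<Sum>i=1..N. \<bar>X i \<omega>\<bar>) / real N" for \<omega>
  have int_T: "integrable M T"
    unfolding T_def using int by (intro integrable_divide integrable_sum integrable_abs) auto
  then have [measurable]: "T \<in> borel_measurable M"
    by (rule borel_measurable_integrable)
  have T_nonneg: "0 \<le> T \<omega>" for \<omega>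
    unfolding T_def by (intro divide_nonneg_nonneg sum_nonneg) auto
  have "\<bar>(\<Sum>i=1..N. X i \<omega>) / real N\<bar> \<le> T \<omega>" for \<omega>
    unfolding T_def by (simp add: abs_divide divide_right_mono sum_abs)
  then have "measure M {\<omega> \<in> space M. \<bar>(\<Sum>i=1..N. X i \<omega>) / real N\<bar> > \<epsilon>}
      \<le> measure M {\<omega> \<in> space M. T \<omega> \<ge> \<epsilon>}"
    by (intro finite_measure_mono) (auto intro: less_imp_le less_le_trans)
  also have "\<dots> \<le> (\<integral>\<omega>. T \<omega> \<partial>M) / \<epsilon>"
    using int_T T_nonneg \<open>\<epsilon> > 0\<close> by (intro integral_Markov_inequality_measure[where A = "space M"]) auto
  also have "(\<integral>\<omega>. (\<Sum>i=1..N. \<bar>X i \<omega>\<bar>) \<partial>M) = (\<Sum>i=1..N. \<integral>\<omega>. \<bar>X i \<omega>\<bar> \<partial>M)"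
    using int by (intro Bochner_Integration.integral_sum integrable_abs) auto
  then have "(\<integral>\<omega>. T \<omega> \<partial>M) = (\<Sum>i=1..N. \<integral>\<omega>. \<bar>X i \<omega>\<bar> \<partial>M) / real N"
    by (simp add: T_def)
  finally show ?thesis .
qed

lemma conv_in_prob_mean_if_L1_null:
  fixes X :: "nat \<Rightarrow> 'a \<Rightarrow> real"
  assumes int: "\<And>i. 1 \<le> i \<Longrightarrow> integrable M (X i)"
    and null: "(\<lambda>i. \<integral>\<omega>. \<bar>X i \<omega>\<bar> \<partial>M) \<longlonglongrightarrow> 0"
  shows "conv_in_prob M (\<lambda>N \<omega>. (\<Sum>i=1..N. X i \<omega>) / real N) 0"
proof (rule conv_in_prob_by_tail_bound)
  fix \<epsilon> :: real
  assume "\<epsilon> > 0"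
  have "(\<lambda>N. (\<Sum>i=1..N. \<integral>\<omega>. \<bar>X i \<omega>\<bar> \<partial>M) / real N / \<epsilon>) \<longlonglongrightarrow> 0"
    using Cesaro_mean_tendsto_zero[OF null] by (intro tendsto_divide_zero) auto
  moreover have "measure M {\<omega> \<in> space M. \<bar>(\<Sum>i=1..N. X i \<omega>) / real N - 0\<bar> > \<epsilon>}
      \<le> (\<Sum>i=1..N. \<integral>\<omega>. \<bar>X i \<omega>\<bar> \<partial>M) / real N / \<epsilon>" for N
    using prob_abs_mean_gt_le[OF int \<open>\<epsilon> > 0\<close>] by simp
  ultimately show "\<exists>b. b \<longlonglongrightarrow> 0 \<and> (\<forall>\<^sub>F N in sequentially.
      measure M {\<omega> \<in> space M. \<bar>(\<Sum>i=1..N. X i \<omega>) / real N - 0\<bar> > \<epsilon>} \<le> b N)"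
    by (intro exI conjI always_eventually allI)
qed

lemma integral_square_sum_orthogonal_le:
  fixes D :: "nat \<Rightarrow> 'a \<Rightarrow> real"
  assumes meas: "\<And>i. 1 \<le> i \<Longrightarrow> D i \<in> borel_measurable M"
    and bound: "\<And>i \<omega>. 1 \<le> i \<Longrightarrow> \<omega> \<in> space M \<Longrightarrow> \<bar>D i \<omega>\<bar> \<le> C"
    and orth: "\<And>i j. 1 \<le> i \<Longrightarrow> i < j \<Longrightarrow> (\<integral>\<omega>. D i \<omega> * D j \<omega> \<partial>M) = 0"
  shows "(\<integral>\<omega>. (\<Sum>i=1..N. D i \<omega>)\<^sup>2 \<partial>M) \<le> real N * C\<^sup>2"
proof -
  have prod_bound: "\<bar>D i \<omega> * D j \<omega>\<bar> \<le> C\<^sup>2" if "1 \<le> i" "1 \<le> j" "\<omega> \<in> space M" for i j \<omega>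
    using bound[OF that(1,3)] bound[OF that(2,3)]
    by (simp add: abs_mult power2_eq_square mult_mono)
  have int: "integrable M (\<lambda>\<omega>. D i \<omega> * D j \<omega>)" if "1 \<le> i" "1 \<le> j" for i j
    using that meas prod_bound by (intro integrable_if_bounded[where B = "C\<^sup>2"]) auto
  have entry: "(\<integral>\<omega>. D i \<omega> * D j \<omega> \<partial>M) \<le> (if i = j then C\<^sup>2 else 0)" if "1 \<le> i" "1 \<le> j" for i j
  proof (cases i j rule: linorder_cases)
    case less
    then show ?thesis using orth that by simp
  next
    case greater
    then show ?thesis using orth[of j i] that by (simp add: mult.commute)
  next
    case equal
    have "(\<integral>\<omega>. D i \<omega> * D i \<omega> \<partial>M) \<le> (\<integral>\<omega>. C\<^sup>2 \<partial>M)"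
      using int that prod_bound by (intro integral_mono) (auto simp: abs_le_iff)
    then show ?thesis using equal by (simp add: prob_space)
  qed
  have "(\<integral>\<omega>. (\<Sum>i=1..N. D i \<omega>)\<^sup>2 \<partial>M) = (\<integral>\<omega>. (\<Sum>i=1..N. \<Sum>j=1..N. D i \<omega> * D j \<omega>) \<partial>M)"
    by (simp add: power2_eq_square sum_product)
  also have "\<dots> = (\<Sum>i=1..N. \<integral>\<omega>. (\<Sum>j=1..N. D i \<omega> * D j \<omega>) \<partial>M)"
    by (intro Bochner_Integration.integral_sum Bochner_Integration.integrable_sum) (auto intro!: int)
  also have "\<dots> = (\<Sum>i=1..N. \<Sum>j=1..N. \<integral>\<omega>. D i \<omega> * D j \<omega> \<partial>M)"
    by (intro sum.cong refl Bochner_Integration.integral_sum) (auto intro!: int)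
  also have "\<dots> \<le> (\<Sum>i=1..N. \<Sum>j=1..N. if i = j then C\<^sup>2 else 0)"
    using entry by (intro sum_mono) auto
  also have "\<dots> = real N * C\<^sup>2"
    by simp
  finally show ?thesis .
qed

lemma prob_abs_mean_gt_le_orthogonal:
  fixes D :: "nat \<Rightarrow> 'a \<Rightarrow> real"
  assumes meas: "\<And>i. 1 \<le> i \<Longrightarrow> D i \<in> borel_measurable M"
    and bound: "\<And>i \<omega>. 1 \<le> i \<Longrightarrow> \<omega> \<in> space M \<Longrightarrow> \<bar>D i \<omega>\<bar> \<le> C"
    and orth: "\<And>i j. 1 \<le> i \<Longrightarrow> i < j \<Longrightarrow> (\<integral>\<omega>. D i \<omega> * D j \<omega> \<partial>M) = 0"
    and "1 \<le> N" "\<epsilon> > 0"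
  shows "measure M {\<omega> \<in> space M. \<bar>(\<Sum>i=1..N. D i \<omega>) / real N\<bar> > \<epsilon>} \<le> C\<^sup>2 / \<epsilon>\<^sup>2 / real N"
proof -
  have [measurable]: "D i \<in> borel_measurable M" if "1 \<le> i" for i
    using meas that .
  have sum_meas: "(\<lambda>\<omega>. \<Sum>i=1..N. D i \<omega>) \<in> borel_measurable M"
    by measurable
  have "\<bar>(\<Sum>i=1..N. D i \<omega>)\<^sup>2\<bar> \<le> (real N * C)\<^sup>2" if "\<omega> \<in> space M" for \<omega>
  proof -
    have "\<bar>\<Sum>i=1..N. D i \<omega>\<bar> \<le> (\<Sum>i=1..N. C)"
      using bound that by (intro order.trans[OF sum_abs] sum_mono) auto
    then show ?thesis
      by (simp add: abs_le_square_iff[symmetric])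
  qed
  then have int: "integrable M (\<lambda>\<omega>. (\<Sum>i=1..N. D i \<omega>)\<^sup>2)"
    using sum_meas by (intro integrable_if_bounded) auto
  have "real N * \<epsilon> \<le> \<bar>\<Sum>i=1..N. D i \<omega>\<bar>" if "\<bar>(\<Sum>i=1..N. D i \<omega>) / real N\<bar> > \<epsilon>" for \<omega>
    using that \<open>1 \<le> N\<close> by (simp add: abs_divide pos_less_divide_eq mult.commute)
  then have "measure M {\<omega> \<in> space M. \<bar>(\<Sum>i=1..N. D i \<omega>) / real N\<bar> > \<epsilon>}
      \<le> measure M {\<omega> \<in> space M. \<bar>\<Sum>i=1..N. D i \<omega>\<bar> \<ge> real N * \<epsilon>}"
    using sum_meas by (intro finite_measure_mono) auto
  also have "\<dots> \<le> (\<integral>\<omega>. (\<Sum>i=1..N. D i \<omega>)\<^sup>2 \<partial>M) / (real N * \<epsilon>)\<^sup>2"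
    by (rule second_moment_method) (use sum_meas int \<open>1 \<le> N\<close> \<open>\<epsilon> > 0\<close> in auto)
  also have "\<dots> \<le> real N * C\<^sup>2 / (real N * \<epsilon>)\<^sup>2"
    by (intro divide_right_mono integral_square_sum_orthogonal_le[OF meas bound orth]) auto
  also have "\<dots> = C\<^sup>2 / \<epsilon>\<^sup>2 / real N"
    using \<open>1 \<le> N\<close> by (simp add: field_simps power2_eq_square)
  finally show ?thesis .
qed

lemma conv_in_prob_mean_orthogonal:
  fixes D :: "nat \<Rightarrow> 'a \<Rightarrow> real"
  assumes meas: "\<And>i. 1 \<le> i \<Longrightarrow> D i \<in> borel_measurable M"
    and bound: "\<And>i \<omega>. 1 \<le> i \<Longrightarrow> \<omega> \<in> space M \<Longrightarrow> \<bar>D i \<omega>\<bar> \<le> C"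
    and orth: "\<And>i j. 1 \<le> i \<Longrightarrow> i < j \<Longrightarrow> (\<integral>\<omega>. D i \<omega> * D j \<omega> \<partial>M) = 0"
  shows "conv_in_prob M (\<lambda>N \<omega>. (\<Sum>i=1..N. D i \<omega>) / real N) 0"
proof (rule conv_in_prob_by_tail_bound)
  fix \<epsilon> :: real
  assume "\<epsilon> > 0"
  have "\<forall>\<^sub>F N in sequentially. measure M {\<omega> \<in> space M. \<bar>(\<Sum>i=1..N. D i \<omega>) / real N - 0\<bar> > \<epsilon>}
      \<le> C\<^sup>2 / \<epsilon>\<^sup>2 / real N"
    using eventually_ge_at_top[of 1]
    by eventually_elim (use prob_abs_mean_gt_le_orthogonal[OF assms _ \<open>\<epsilon> > 0\<close>] in simp)
  then show "\<exists>b. b \<longlonglongrightarrow> 0 \<and> (\<forall>\<^sub>F N in sequentially.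
      measure M {\<omega> \<in> space M. \<bar>(\<Sum>i=1..N. D i \<omega>) / real N - 0\<bar> > \<epsilon>} \<le> b N)"
    using lim_const_over_n[of "C\<^sup>2 / \<epsilon>\<^sup>2"] by blast
qed

end

section \<open>Sequential designs\<close>

lemma m1hat_sq_eq:
  "m1hat_sq K Y0 Y1 N \<omega> = (\<Sum>i=1..N. treated K i \<omega> * (Y1 i)\<^sup>2) / max (\<Sum>i=1..N. treated K i \<omega>) 1"
  unfolding m1hat_sq_def N1_def by (intro arg_cong2[where f = "(/)"] sum.cong) (auto simp: obs_def)

lemma m0hat_sq_eq:
  "m0hat_sq K Y0 Y1 N \<omega> =
     ((\<Sum>i=1..N. (Y0 i)\<^sup>2) - (\<Sum>i=1..N. treated K i \<omega> * (Y0 i)\<^sup>2))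
       / max (real N - (\<Sum>i=1..N. treated K i \<omega>)) 1"
proof -
  have "(\<Sum>i=1..N. (if K i \<omega> then 0 else 1) * (obs K Y0 Y1 i \<omega>)\<^sup>2)
      = (\<Sum>i=1..N. (Y0 i)\<^sup>2 - treated K i \<omega> * (Y0 i)\<^sup>2)"
    by (intro sum.cong) (auto simp: obs_def)
  then show ?thesis
    unfolding m0hat_sq_def N0_def N1_def by (simp add: sum_subtractf)
qed

locale stable_sequential_design = prob_space M for M :: "'a measure" +
  fixes K :: "nat \<Rightarrow> 'a \<Rightarrow> bool" and Y0 Y1 :: "nat \<Rightarrow> real"
    and p :: "nat \<Rightarrow> 'a \<Rightarrow> real" and ps :: real
  assumes design: "sequential_design M K Y0 Y1 p"
    and p_range: "\<And>i \<omega>. 1 \<le> i \<Longrightarrow> \<omega> \<in> space M \<Longrightarrow> 0 \<le> p i \<omega> \<and> p i \<omega> \<le> 1"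
    and ps_range: "0 < ps" "ps < 1"
    and p_stable: "conv_in_prob M p ps"
begin

abbreviation F :: "nat \<Rightarrow> 'a measure" where
  "F \<equiv> hist M K Y0 Y1"

definition hist_generators :: "nat \<Rightarrow> 'a set set" where
  "hist_generators n = {(\<lambda>\<omega>. (K j \<omega>, obs K Y0 Y1 j \<omega>)) -` A \<inter> space M | j A.
     1 \<le> j \<and> j \<le> n \<and> A \<in> sets (count_space UNIV \<Otimes>\<^sub>M (borel :: real measure))}"

lemma K_measurable: "1 \<le> i \<Longrightarrow> K i \<in> M \<rightarrow>\<^sub>M count_space UNIV"
  using design unfolding sequential_design_def by blast

lemma hist_generators_subset: "hist_generators n \<subseteq> sets M"
proof -
  have "(\<lambda>\<omega>. (K j \<omega>, obs K Y0 Y1 j \<omega>)) \<in> M \<rightarrow>\<^sub>M count_space UNIV \<Otimes>\<^sub>M borel" if "1 \<le> j" for j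
  proof -
    have K: "K j \<in> M \<rightarrow>\<^sub>M count_space UNIV"
      using K_measurable[OF that] .
    have "obs K Y0 Y1 j = (\<lambda>\<omega>. (\<lambda>b. if b then Y1 j else Y0 j) (K j \<omega>))"
      by (auto simp: obs_def)
    also have "\<dots> \<in> borel_measurable M"
      by (rule measurable_compose[OF K]) simp
    finally show ?thesis
      by (rule measurable_Pair[OF K])
  qed
  then show ?thesis
    unfolding hist_generators_def using measurable_sets by blast
qed

lemma space_F: "space (F n) = space M"
  unfolding hist_def by (simp add: space_measure_of_conv)

lemma sets_F: "sets (F n) = sigma_sets (space M) (hist_generators n)"
proof -
  have "hist_generators n \<subseteq> Pow (space M)"
    unfolding hist_generators_def by auto
  then show ?thesis
    unfolding hist_def hist_generators_def[symmetric] by (simp add: sets_measure_of)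
qed

lemma subalgebra_F: "subalgebra M (F n)"
  unfolding subalgebra_def space_F sets_F
  using sets.sigma_sets_subset[OF hist_generators_subset] by simp

lemma measurable_F_mono:
  assumes "m \<le> n" and "f \<in> borel_measurable (F m)"
  shows "f \<in> borel_measurable (F n)"
proof -
  have "hist_generators m \<subseteq> hist_generators n"
    using \<open>m \<le> n\<close> unfolding hist_generators_def by fastforce
  then have "subalgebra (F n) (F m)"
    unfolding subalgebra_def space_F sets_F by (simp add: sigma_sets_mono')
  then show ?thesis
    using measurable_from_subalg assms(2) by blast
qed

lemma treated_F_measurable:
  assumes "1 \<le> i" "i \<le> n"
  shows "(\<lambda>\<omega>. treated K i \<omega>) \<in> borel_measurable (F n)"
proof -
  have "(\<lambda>\<omega>. (K i \<omega>, obs K Y0 Y1 i \<omega>)) -` ({True} \<times> UNIV) \<inter> space M \<in> hist_generators n"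
    unfolding hist_generators_def using assms
    by (intro CollectI exI[of _ i] exI[of _ "{True} \<times> UNIV"]) (auto intro: pair_measureI)
  moreover have "(\<lambda>\<omega>. (K i \<omega>, obs K Y0 Y1 i \<omega>)) -` ({True} \<times> UNIV) \<inter> space M = {\<omega> \<in> space (F n). K i \<omega>}"
    by (auto simp: space_F)
  ultimately have "{\<omega> \<in> space (F n). K i \<omega>} \<in> sets (F n)"
    by (auto simp: sets_F)
  then show ?thesis
    by (intro measurable_If) auto
qed

lemma treated_measurable [measurable]: "1 \<le> i \<Longrightarrow> (\<lambda>\<omega>. treated K i \<omega>) \<in> borel_measurable M"
  using measurable_from_subalg[OF subalgebra_F treated_F_measurable] by blast

lemma p_F_measurable: "1 \<le> i \<Longrightarrow> p i \<in> borel_measurable (F (i - 1))"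
  using design unfolding sequential_design_def by blast

lemma p_measurable [measurable]: "1 \<le> i \<Longrightarrow> p i \<in> borel_measurable M"
  using measurable_from_subalg[OF subalgebra_F p_F_measurable] by blast

lemma integral_predictable_times_innovation:
  assumes "1 \<le> j" and g: "g \<in> borel_measurable (F (j - 1))"
    and bound: "\<And>\<omega>. \<omega> \<in> space M \<Longrightarrow> \<bar>g \<omega>\<bar> \<le> C"
  shows "(\<integral>\<omega>. g \<omega> * (treated K j \<omega> - p j \<omega>) \<partial>M) = 0"
proof -
  interpret Fj: finite_measure_subalgebra M "F (j - 1)"
    by unfold_locales (rule subalgebra_F)
  have [measurable]: "g \<in> borel_measurable M"
    using measurable_from_subalg[OF subalgebra_F g] .
  have indicator_eq: "indicator {\<omega>. K j \<omega>} = (\<lambda>\<omega>. treated K j \<omega>)"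
    by (auto simp: indicator_def)
  have [measurable]: "(indicator {\<omega>. K j \<omega>} :: 'a \<Rightarrow> real) \<in> borel_measurable M"
    unfolding indicator_eq by (rule treated_measurable[OF \<open>1 \<le> j\<close>])
  have cond: "AE \<omega> in M. real_cond_exp M (F (j - 1)) (indicator {\<omega>. K j \<omega>}) \<omega> = p j \<omega>"
    using design \<open>1 \<le> j\<close> unfolding sequential_design_def by auto
  have int_treated: "integrable M (\<lambda>\<omega>. g \<omega> * indicator {\<omega>. K j \<omega>} \<omega>)"
  proof (rule integrable_if_bounded[where B = C])
    show "(\<lambda>\<omega>. g \<omega> * indicator {\<omega>. K j \<omega>} \<omega>) \<in> borel_measurable M"
      by measurable
    show "\<bar>g \<omega> * indicator {\<omega>. K j \<omega>} \<omega>\<bar> \<le> C" if "\<omega> \<in> space M" for \<omega>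
      using bound[OF that] by (auto simp: indicator_def)
  qed
  have int_p: "integrable M (\<lambda>\<omega>. g \<omega> * p j \<omega>)"
  proof (rule integrable_if_bounded[where B = "C * 1"])
    show "(\<lambda>\<omega>. g \<omega> * p j \<omega>) \<in> borel_measurable M"
      using \<open>1 \<le> j\<close> by measurable
    show "\<bar>g \<omega> * p j \<omega>\<bar> \<le> C * 1" if "\<omega> \<in> space M" for \<omega>
      using bound[OF that] p_range[OF \<open>1 \<le> j\<close> that] unfolding abs_mult by (intro mult_mono) auto
  qed
  note tower = Fj.real_cond_exp_intg[OF int_treated g]
  have "(\<integral>\<omega>. g \<omega> * indicator {\<omega>. K j \<omega>} \<omega> \<partial>M)
      = (\<integral>\<omega>. g \<omega> * real_cond_exp M (F (j - 1)) (indicator {\<omega>. K j \<omega>}) \<omega> \<partial>M)"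
    using tower(2) by simp
  also have "\<dots> = (\<integral>\<omega>. g \<omega> * p j \<omega> \<partial>M)"
    using cond tower(1) \<open>1 \<le> j\<close> by (intro integral_cong_AE) auto
  finally show ?thesis
    using int_treated int_p by (simp add: right_diff_distrib indicator_eq)
qed

lemma innovation_abs_le: "1 \<le> i \<Longrightarrow> \<omega> \<in> space M \<Longrightarrow> \<bar>treated K i \<omega> - p i \<omega>\<bar> \<le> 1"
  using p_range by auto

lemma drift_abs_le: "1 \<le> i \<Longrightarrow> \<omega> \<in> space M \<Longrightarrow> \<bar>p i \<omega> - ps\<bar> \<le> 1"
  using p_range ps_range by fastforce

lemma innovations_orthogonal:
  assumes bound: "\<And>i. 1 \<le> i \<Longrightarrow> \<bar>a i\<bar> \<le> A" and "1 \<le> i" "i < j"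
  shows "(\<integral>\<omega>. (treated K i \<omega> - p i \<omega>) * a i * ((treated K j \<omega> - p j \<omega>) * a j) \<partial>M) = 0"
proof -
  have "(\<lambda>\<omega>. treated K i \<omega>) \<in> borel_measurable (F (j - 1))"
    using assms by (intro treated_F_measurable) auto
  moreover have "p i \<in> borel_measurable (F (j - 1))"
    using assms by (intro measurable_F_mono[OF _ p_F_measurable]) auto
  ultimately have meas: "(\<lambda>\<omega>. (treated K i \<omega> - p i \<omega>) * a i * a j) \<in> borel_measurable (F (j - 1))"
    by measurable
  have bnd: "\<bar>(treated K i \<omega> - p i \<omega>) * a i * a j\<bar> \<le> 1 * A * A" if "\<omega> \<in> space M" for \<omega>
    using innovation_abs_le[OF \<open>1 \<le> i\<close> that] bound[OF \<open>1 \<le> i\<close>] bound[of j] \<open>i < j\<close>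
    unfolding abs_mult by (intro mult_mono) auto
  have "(\<integral>\<omega>. (treated K i \<omega> - p i \<omega>) * a i * a j * (treated K j \<omega> - p j \<omega>) \<partial>M) = 0"
    using \<open>i < j\<close> by (intro integral_predictable_times_innovation[OF _ meas bnd]) simp
  then show ?thesis
    by (simp add: ac_simps)
qed

lemma conv_in_prob_innovation_mean:
  assumes bound: "\<And>i. 1 \<le> i \<Longrightarrow> \<bar>a i\<bar> \<le> A"
  shows "conv_in_prob M (\<lambda>N \<omega>. (\<Sum>i=1..N. (treated K i \<omega> - p i \<omega>) * a i) / real N) 0"
proof (rule conv_in_prob_mean_orthogonal)
  show "(\<lambda>\<omega>. (treated K i \<omega> - p i \<omega>) * a i) \<in> borel_measurable M" if "1 \<le> i" for i
    using that by measurable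
  show "\<bar>(treated K i \<omega> - p i \<omega>) * a i\<bar> \<le> 1 * A" if "1 \<le> i" "\<omega> \<in> space M" for i \<omega>
    using innovation_abs_le[OF that] bound[OF that(1)] unfolding abs_mult by (intro mult_mono) auto
  show "(\<integral>\<omega>. (treated K i \<omega> - p i \<omega>) * a i * ((treated K j \<omega> - p j \<omega>) * a j) \<partial>M) = 0"
    if "1 \<le> i" "i < j" for i j
    using bound that by (rule innovations_orthogonal)
qed

lemma conv_in_prob_drift_mean:
  assumes bound: "\<And>i. 1 \<le> i \<Longrightarrow> \<bar>a i\<bar> \<le> A"
  shows "conv_in_prob M (\<lambda>N \<omega>. (\<Sum>i=1..N. (p i \<omega> - ps) * a i) / real N) 0"
proof (rule conv_in_prob_mean_if_L1_null)
  show "integrable M (\<lambda>\<omega>. (p i \<omega> - ps) * a i)" if "1 \<le> i" for i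
  proof (rule integrable_if_bounded[where B = "1 * A"])
    show "(\<lambda>\<omega>. (p i \<omega> - ps) * a i) \<in> borel_measurable M"
      using that by measurable
    show "\<bar>(p i \<omega> - ps) * a i\<bar> \<le> 1 * A" if "\<omega> \<in> space M" for \<omega>
      using drift_abs_le[OF \<open>1 \<le> i\<close> that] bound[OF \<open>1 \<le> i\<close>] unfolding abs_mult
      by (intro mult_mono) auto
  qed
  have p_L1: "(\<lambda>i. \<integral>\<omega>. \<bar>p i \<omega> - ps\<bar> \<partial>M) \<longlonglongrightarrow> 0"
    using p_measurable drift_abs_le by (rule integral_abs_tendsto_zero_if_conv_in_prob[OF _ _ p_stable])
  have le: "\<forall>\<^sub>F i in sequentially. (\<integral>\<omega>. \<bar>(p i \<omega> - ps) * a i\<bar> \<partial>M) \<le> (\<integral>\<omega>. \<bar>p i \<omega> - ps\<bar> \<partial>M) * A"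
    using eventually_ge_at_top[of 1]
  proof eventually_elim
    case (elim i)
    have "0 \<le> (\<integral>\<omega>. \<bar>p i \<omega> - ps\<bar> \<partial>M)"
      by simp
    then show ?case
      using bound[OF elim] by (simp add: abs_mult mult_left_mono)
  qed
  show "(\<lambda>i. \<integral>\<omega>. \<bar>(p i \<omega> - ps) * a i\<bar> \<partial>M) \<longlonglongrightarrow> 0"
    by (rule tendsto_sandwich[OF _ le tendsto_const tendsto_mult_left_zero[OF p_L1]]) simp
qed

lemma conv_in_prob_treated_mean:
  assumes bound: "\<And>i. 1 \<le> i \<Longrightarrow> \<bar>a i\<bar> \<le> A"
    and mean: "(\<lambda>N. (\<Sum>i=1..N. a i) / real N) \<longlonglongrightarrow> L"
  shows "conv_in_prob M (\<lambda>N \<omega>. (\<Sum>i=1..N. treated K i \<omega> * a i) / real N) (ps * L)"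
proof -
  let ?innovation = "\<lambda>N \<omega>. (\<Sum>i=1..N. (treated K i \<omega> - p i \<omega>) * a i) / real N"
  let ?drift = "\<lambda>N \<omega>. (\<Sum>i=1..N. (p i \<omega> - ps) * a i) / real N"
  have [measurable]: "?innovation N \<in> borel_measurable M" for N
    by measurable
  have [measurable]: "?drift N \<in> borel_measurable M" for N
    by measurable
  have "conv_in_prob M (\<lambda>N \<omega>. ?innovation N \<omega> + ?drift N \<omega>) (0 + 0)"
    by (rule conv_in_prob_add[OF _ _ conv_in_prob_innovation_mean[OF bound]
          conv_in_prob_drift_mean[OF bound]]; measurable)
  moreover have "conv_in_prob M (\<lambda>N \<omega>. ps * ((\<Sum>i=1..N. a i) / real N)) (ps * L)"
    using mean by (intro conv_in_prob_of_tendsto tendsto_intros)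
  ultimately have "conv_in_prob M (\<lambda>N \<omega>. (?innovation N \<omega> + ?drift N \<omega>)
      + ps * ((\<Sum>i=1..N. a i) / real N)) ((0 + 0) + ps * L)"
    by (rule conv_in_prob_add[rotated 2]) measurable
  moreover have "(\<Sum>i=1..N. treated K i \<omega> * a i)
      = (\<Sum>i=1..N. (treated K i \<omega> - p i \<omega>) * a i + (p i \<omega> - ps) * a i + ps * a i)" for N \<omega>
    by (rule sum.cong) (simp_all add: algebra_simps)
  then have "(\<Sum>i=1..N. treated K i \<omega> * a i)
      = (\<Sum>i=1..N. (treated K i \<omega> - p i \<omega>) * a i) + (\<Sum>i=1..N. (p i \<omega> - ps) * a i)
        + ps * (\<Sum>i=1..N. a i)" for N \<omega>
    by (simp add: sum.distrib sum_distrib_left)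
  ultimately show ?thesis
    by (simp add: add_divide_distrib)
qed

lemma conv_in_prob_treated_fraction:
  "conv_in_prob M (\<lambda>N \<omega>. (\<Sum>i=1..N. treated K i \<omega>) / real N) ps"
proof -
  have "(\<lambda>N. (\<Sum>i=1..N. 1) / real N) \<longlonglongrightarrow> (1 :: real)"
    by (rule tendsto_eventually) (simp add: eventually_ge_at_top[of 1])
  then have "conv_in_prob M (\<lambda>N \<omega>. (\<Sum>i=1..N. treated K i \<omega> * 1) / real N) (ps * 1)"
    by (rule conv_in_prob_treated_mean[where A = 1, rotated]) simp
  then show ?thesis
    by simp
qed

lemma conv_in_prob_m1hat_sq:
  assumes bound: "\<And>i. 1 \<le> i \<Longrightarrow> \<bar>Y1 i\<bar> \<le> B"
    and mean: "(\<lambda>N. (\<Sum>i=1..N. (Y1 i)\<^sup>2) / real N) \<longlonglongrightarrow> m1sq"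
  shows "conv_in_prob M (m1hat_sq K Y0 Y1) m1sq"
proof -
  have "conv_in_prob M (\<lambda>N \<omega>. (\<Sum>i=1..N. treated K i \<omega> * (Y1 i)\<^sup>2) / max (\<Sum>i=1..N. treated K i \<omega>) 1) m1sq"
    by (rule conv_in_prob_ratio[OF _ _ conv_in_prob_treated_mean[OF abs_power2_le_power2[OF bound] mean]
          conv_in_prob_treated_fraction ps_range(1)]; measurable)
  then show ?thesis
    by (simp add: m1hat_sq_eq[abs_def])
qed

lemma conv_in_prob_m0hat_sq:
  assumes bound: "\<And>i. 1 \<le> i \<Longrightarrow> \<bar>Y0 i\<bar> \<le> B"
    and mean: "(\<lambda>N. (\<Sum>i=1..N. (Y0 i)\<^sup>2) / real N) \<longlonglongrightarrow> m0sq"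
  shows "conv_in_prob M (m0hat_sq K Y0 Y1) m0sq"
proof -
  have "conv_in_prob M (\<lambda>N \<omega>. (\<Sum>i=1..N. (Y0 i)\<^sup>2) / real N
      - (\<Sum>i=1..N. treated K i \<omega> * (Y0 i)\<^sup>2) / real N) (m0sq - ps * m0sq)"
    by (rule conv_in_prob_diff[OF _ _ conv_in_prob_of_tendsto[OF mean]
          conv_in_prob_treated_mean[OF abs_power2_le_power2[OF bound] mean]]; measurable)
  then have untreated_sum: "conv_in_prob M (\<lambda>N \<omega>. ((\<Sum>i=1..N. (Y0 i)\<^sup>2)
      - (\<Sum>i=1..N. treated K i \<omega> * (Y0 i)\<^sup>2)) / real N) ((1 - ps) * m0sq)"
    by (simp add: diff_divide_distrib left_diff_distrib)
  have one: "(\<lambda>N. real N / real N) \<longlonglongrightarrow> (1 :: real)"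
    by (rule tendsto_eventually) (simp add: eventually_ge_at_top[of 1])
  have "conv_in_prob M (\<lambda>N \<omega>. real N / real N - (\<Sum>i=1..N. treated K i \<omega>) / real N) (1 - ps)"
    by (rule conv_in_prob_diff[OF _ _ conv_in_prob_of_tendsto[OF one] conv_in_prob_treated_fraction]; measurable)
  then have untreated_count: "conv_in_prob M (\<lambda>N \<omega>. (real N - (\<Sum>i=1..N. treated K i \<omega>)) / real N) (1 - ps)"
    by (simp add: diff_divide_distrib)
  have "conv_in_prob M (\<lambda>N \<omega>. ((\<Sum>i=1..N. (Y0 i)\<^sup>2) - (\<Sum>i=1..N. treated K i \<omega> * (Y0 i)\<^sup>2))
      / max (real N - (\<Sum>i=1..N. treated K i \<omega>)) 1) m0sq"
    using ps_range by (intro conv_in_prob_ratio[OF _ _ untreated_sum untreated_count]; measurable)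
  then show ?thesis
    by (simp add: m0hat_sq_eq[abs_def])
qed

lemma conv_in_prob_Vhat_strong:
  assumes "conv_in_prob M (m0hat_sq K Y0 Y1) a" and "conv_in_prob M (m1hat_sq K Y0 Y1) b"
  shows "conv_in_prob M (Vhat_strong K Y0 Y1 ps)
           ((sqrt a * sqrt (ps / (1 - ps)) + sqrt b * sqrt ((1 - ps) / ps))\<^sup>2)"
proof -
  let ?g = "\<lambda>z::real \<times> real. (sqrt (fst z) * sqrt (ps / (1 - ps)) + sqrt (snd z) * sqrt ((1 - ps) / ps))\<^sup>2"
  have "m0hat_sq K Y0 Y1 N \<in> borel_measurable M" "m1hat_sq K Y0 Y1 N \<in> borel_measurable M" for N
    unfolding m0hat_sq_eq[abs_def] m1hat_sq_eq[abs_def] by measurable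
  moreover have "isCont ?g (a, b)"
    by (intro continuous_intros)
  ultimately show ?thesis
    using conv_in_prob_continuous_map[OF _ _ assms, of ?g] by (simp add: Vhat_strong_def[abs_def])
qed

end

section \<open>The limiting variance\<close>

lemma Vhat_limit_expand:
  fixes x y ps :: real
  assumes "0 < ps" "ps < 1" "0 \<le> x" "0 \<le> y"
  shows "(sqrt x * sqrt (ps / (1 - ps)) + sqrt y * sqrt ((1 - ps) / ps))\<^sup>2
       = x * (ps / (1 - ps)) + y * ((1 - ps) / ps) + 2 * sqrt (x * y)"
proof -
  have "sqrt (ps / (1 - ps)) * sqrt ((1 - ps) / ps) = 1"
    using assms by (simp add: real_sqrt_mult[symmetric])
  then have "sqrt x * sqrt (ps / (1 - ps)) * (sqrt y * sqrt ((1 - ps) / ps)) = sqrt (x * y)"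
    by (simp add: real_sqrt_mult mult_ac)
  then show ?thesis
    using assms by (simp add: power2_sum power_mult_distrib)
qed

lemma mean_cross_le_sqrt_mean_squares:
  fixes u v :: "nat \<Rightarrow> real"
  assumes "(\<lambda>N. (\<Sum>i=1..N. (u i)\<^sup>2) / real N) \<longlonglongrightarrow> su"
    and "(\<lambda>N. (\<Sum>i=1..N. (v i)\<^sup>2) / real N) \<longlonglongrightarrow> sv"
    and "(\<lambda>N. (\<Sum>i=1..N. u i * v i) / real N) \<longlonglongrightarrow> suv"
  shows "suv \<le> sqrt (su * sv)"
proof -
  have "((\<Sum>i=1..N. u i * v i) / real N)\<^sup>2
      \<le> (\<Sum>i=1..N. (u i)\<^sup>2) / real N * ((\<Sum>i=1..N. (v i)\<^sup>2) / real N)" for N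
    using divide_right_mono[OF Cauchy_Schwarz_ineq_sum[of u v "{1..N}"], of "(real N)\<^sup>2"]
    by (simp add: power_divide power2_eq_square)
  then have "suv\<^sup>2 \<le> su * sv"
    by (intro LIMSEQ_le[OF tendsto_power[OF assms(3)] tendsto_mult[OF assms(1,2)]]) auto
  then show ?thesis
    by (rule real_le_rsqrt)
qed

lemma mean_cross_eq_sqrt_if_proportional:
  fixes u v :: "nat \<Rightarrow> real"
  assumes su: "(\<lambda>N. (\<Sum>i=1..N. (u i)\<^sup>2) / real N) \<longlonglongrightarrow> su"
    and sv: "(\<lambda>N. (\<Sum>i=1..N. (v i)\<^sup>2) / real N) \<longlonglongrightarrow> sv"
    and suv: "(\<lambda>N. (\<Sum>i=1..N. u i * v i) / real N) \<longlonglongrightarrow> suv"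
    and "0 \<le> c" and proportional: "\<And>i. 1 \<le> i \<Longrightarrow> v i = c * u i"
  shows "suv = sqrt (su * sv)"
proof -
  have "(\<Sum>i=1..N. (v i)\<^sup>2) = c\<^sup>2 * (\<Sum>i=1..N. (u i)\<^sup>2)"
    and "(\<Sum>i=1..N. u i * v i) = c * (\<Sum>i=1..N. (u i)\<^sup>2)" for N
    using proportional by (auto simp: sum_distrib_left power_mult_distrib power2_eq_square intro!: sum.cong)
  then have "(\<lambda>N. (\<Sum>i=1..N. (v i)\<^sup>2) / real N) \<longlonglongrightarrow> c\<^sup>2 * su"
    and "(\<lambda>N. (\<Sum>i=1..N. u i * v i) / real N) \<longlonglongrightarrow> c * su"
    using tendsto_mult_left[OF su] by (simp_all add: mult.assoc)
  then have "sv = c\<^sup>2 * su" and "suv = c * su"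
    using sv suv LIMSEQ_unique by blast+
  moreover have "0 \<le> su"
    using su by (rule LIMSEQ_le_const) (auto intro!: divide_nonneg_nonneg sum_nonneg)
  ultimately show ?thesis
    using \<open>0 \<le> c\<close> by (simp add: power2_eq_square real_sqrt_mult)
qed

theorem theorem2:
  fixes M :: "'a measure" and K :: "nat \<Rightarrow> 'a \<Rightarrow> bool" and p :: "nat \<Rightarrow> 'a \<Rightarrow> real"
    and Y0 Y1 :: "nat \<Rightarrow> real" and ps \<delta> B m0sq m1sq m01 :: real
  assumes "prob_space M"
    and design: "sequential_design M K Y0 Y1 p"
    and stable: "0 < ps" "ps < 1" "conv_in_prob M p ps"
    and A_a: "0 < \<delta>" "\<delta> < 1" "\<And>i \<omega>. 1 \<le> i \<Longrightarrow> \<omega> \<in> space M \<Longrightarrow> \<delta> \<le> p i \<omega> \<and> p i \<omega> \<le> 1 - \<delta>"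
    and A_b: "0 < B" "\<And>i. 1 \<le> i \<Longrightarrow> \<bar>Y0 i\<bar> \<le> B \<and> \<bar>Y1 i\<bar> \<le> B"
    and A_c: "(\<lambda>N. (\<Sum>i=1..N. (Y0 i)\<^sup>2) / real N) \<longlonglongrightarrow> m0sq"
             "(\<lambda>N. (\<Sum>i=1..N. (Y1 i)\<^sup>2) / real N) \<longlonglongrightarrow> m1sq"
             "(\<lambda>N. (\<Sum>i=1..N. Y0 i * Y1 i) / real N) \<longlonglongrightarrow> m01"
             "m0sq > 0" "m1sq > 0"
  shows "conv_in_prob M (m0hat_sq K Y0 Y1) m0sq
       \<and> conv_in_prob M (m1hat_sq K Y0 Y1) m1sq
       \<and> conv_in_prob M (Vhat_strong K Y0 Y1 ps)
           ((sqrt m0sq * sqrt (ps / (1 - ps)) + sqrt m1sq * sqrt ((1 - ps) / ps))\<^sup>2)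
       \<and> (sqrt m0sq * sqrt (ps / (1 - ps)) + sqrt m1sq * sqrt ((1 - ps) / ps))\<^sup>2
           \<ge> m0sq * (ps / (1 - ps)) + m1sq * ((1 - ps) / ps) + 2 * m01
       \<and> ((\<exists>c>0. \<forall>i\<ge>1. Y1 i = c * Y0 i) \<longrightarrow>
            conv_in_prob M (Vhat_strong K Y0 Y1 ps)
              (m0sq * (ps / (1 - ps)) + m1sq * ((1 - ps) / ps) + 2 * m01))"
proof -
  \<comment> \<open>Assumption A(a) enters only through the bounds 0 \<le> p i \<le> 1.\<close>
  interpret stable_sequential_design M K Y0 Y1 p ps
    using assms(1) design stable A_a
    by (intro stable_sequential_design.intro stable_sequential_design_axioms.intro) force+
  have m0: "conv_in_prob M (m0hat_sq K Y0 Y1) m0sq"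
    using A_b(2) by (intro conv_in_prob_m0hat_sq[OF _ A_c(1)]) blast
  have m1: "conv_in_prob M (m1hat_sq K Y0 Y1) m1sq"
    using A_b(2) by (intro conv_in_prob_m1hat_sq[OF _ A_c(2)]) blast
  have limit_eq: "(sqrt m0sq * sqrt (ps / (1 - ps)) + sqrt m1sq * sqrt ((1 - ps) / ps))\<^sup>2
      = m0sq * (ps / (1 - ps)) + m1sq * ((1 - ps) / ps) + 2 * sqrt (m0sq * m1sq)"
    using stable(1,2) A_c(4,5) by (intro Vhat_limit_expand) auto
  have "m01 \<le> sqrt (m0sq * m1sq)"
    by (rule mean_cross_le_sqrt_mean_squares[OF A_c(1-3)])
  moreover have "m01 = sqrt (m0sq * m1sq)" if "\<exists>c>0. \<forall>i\<ge>1. Y1 i = c * Y0 i"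
    using that mean_cross_eq_sqrt_if_proportional[OF A_c(1-3)] by (meson less_imp_le)
  ultimately show ?thesis
    using m0 m1 conv_in_prob_Vhat_strong[OF m0 m1] limit_eq by auto
qed

end
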